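(* Let $P_1,P_2$ be probability measures on $(\Omega,\mathcal A)$, let $\delta_1,\delta_2\in(\tfrac12,1)$, and let $\bar{\mathbf C}\subseteq\bar{\mathcal A}$ be a C-class. If $\bar T(P_1,\delta_1)\cup\bar T(P_2,\delta_2)\subseteq\bar{\mathbf C}$, then $P_1=P_2$.
   Context: Let $(\Omega,\mathcal A)$ be a measurable space. For $n\ge1$, $\mathcal A^n$ is the product $\sigma$-algebra on $\Omega^n$; the extended event space is $\bar{\mathcal A}=\bigcup_{n\ge1}\mathcal A^n$, events tagged by their level $n$. For a probability measure $P$ on $\mathcal A$, $P^n$ is its $n$-fold product, $\bar P(A^{(n)})=P^n(A^{(n)})$ for $A^{(n)}\in\mathcal A^n$, and $\bar T(P,\delta)=\{A\in\bar{\mathcal A}:\bar P(A)\ge\delta\}$. A class $\bar{\mathbf C}\subseteq\bar{\mathcal A}$ is a C-class if for every $n\ge1$ the component $\mathcal C^{(n)}=\bar{\mathbf C}\cap\mathcal A^n$ satisfies: $\Omega^n\in\mathcal C^{(n)}$; if $A\in\mathcal C^{(n)}$, $B\in\mathcal A^n$, $A\subseteq B$ then $B\in\mathcal C^{(n)}$; $\mathcal C^{(n)}$ contains no two disjoint events. *)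

theory Defs
  imports "HOL-Probability.Probability"
begin

abbreviation pow_measure :: "'a measure \<Rightarrow> nat \<Rightarrow> (nat \<Rightarrow> 'a) measure" where
  "pow_measure M n \<equiv> PiM {..<n} (\<lambda>_. M)"

definition ext_events :: "'a measure \<Rightarrow> (nat \<times> (nat \<Rightarrow> 'a) set) set" where
  "ext_events M = {(n, A). n \<ge> 1 \<and> A \<in> sets (pow_measure M n)}"

definition T_bar :: "'a measure \<Rightarrow> real \<Rightarrow> (nat \<times> (nat \<Rightarrow> 'a) set) set" where
  "T_bar P \<delta> = {(n, A). (n, A) \<in> ext_events P \<and> measure (pow_measure P n) A \<ge> \<delta>}"

definition C_class :: "'a measure \<Rightarrow> (nat \<times> (nat \<Rightarrow> 'a) set) set \<Rightarrow> bool" where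
  "C_class M C \<longleftrightarrow> C \<subseteq> ext_events M \<and>
     (\<forall>n\<ge>1. (n, space (pow_measure M n)) \<in> C \<and>
        (\<forall>A B. (n, A) \<in> C \<and> B \<in> sets (pow_measure M n) \<and> A \<subseteq> B \<longrightarrow> (n, B) \<in> C) \<and>
        (\<forall>A B. (n, A) \<in> C \<and> (n, B) \<in> C \<longrightarrow> A \<inter> B \<noteq> {}))"

end

theory Submission
  imports Defs
begin

text \<open>
  If \<open>P\<^sub>1 A < P\<^sub>2 A\<close> for some event \<open>A\<close>, the weak law of large numbers (via Chebyshev's inequality)
  gives a level \<open>n\<close> at which the empirical frequency of \<open>A\<close> lies below the midpoint
  \<open>(P\<^sub>1 A + P\<^sub>2 A)/2\<close> with \<open>P\<^sub>1\<^sup>n\<close>-probability at least \<open>\<delta>\<^sub>1\<close>, and above it with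
  \<open>P\<^sub>2\<^sup>n\<close>-probability at least \<open>\<delta>\<^sub>2\<close>. These two events are disjoint, yet both lie in the C-class.
\<close>

definition hits :: "'a set \<Rightarrow> nat \<Rightarrow> (nat \<Rightarrow> 'a) \<Rightarrow> real" where
  "hits A n x = (\<Sum>i<n. indicator A (x i))"

lemma hits_measurable [measurable]:
  assumes "A \<in> sets M"
  shows "hits A n \<in> borel_measurable (pow_measure M n)"
  using assms unfolding hits_def by measurable

lemma measure_PiM_coordinates_in:
  assumes "prob_space P" "A \<in> sets P" "i < n" "j < n"
  shows "measure (pow_measure P n) {x \<in> space (pow_measure P n). x i \<in> A \<and> x j \<in> A}
       = (if i = j then measure P A else measure P A ^ 2)"
proof -
  interpret prob_space P by fact
  let ?Q = "pow_measure P n"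
  have "{x \<in> space ?Q. x i \<in> A \<and> x j \<in> A} = prod_emb {..<n} (\<lambda>_. P) {i, j} (PiE {i, j} (\<lambda>_. A))"
    using assms by (auto simp: prod_emb_def PiE_iff space_PiM extensional_def)
  then have "emeasure ?Q {x \<in> space ?Q. x i \<in> A \<and> x j \<in> A} = (\<Prod>k\<in>{i, j}. emeasure P A)"
    using assms by (simp only:) (intro emeasure_PiM_emb; auto)
  also have "\<dots> = ennreal (if i = j then measure P A else measure P A ^ 2)"
    by (auto simp: emeasure_eq_measure power2_eq_square ennreal_mult)
  finally show ?thesis
    unfolding measure_def by simp
qed

lemma expectation_PiM_indicator_product:
  assumes "prob_space P" "A \<in> sets P" "i < n" "j < n"
  shows "integrable (pow_measure P n) (\<lambda>x. indicator A (x i) * indicator A (x j) :: real)"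
    and "integral\<^sup>L (pow_measure P n) (\<lambda>x. indicator A (x i) * indicator A (x j) :: real)
       = (if i = j then measure P A else measure P A ^ 2)"
proof -
  let ?Q = "pow_measure P n"
  interpret Q: prob_space ?Q
    using assms(1) by (intro prob_space_PiM) auto
  show "integrable ?Q (\<lambda>x. indicator A (x i) * indicator A (x j) :: real)"
    using assms by (intro Q.integrable_const_bound[where B = 1]) (auto simp: indicator_def)
  have "integral\<^sup>L ?Q (\<lambda>x. indicator A (x i) * indicator A (x j) :: real)
      = integral\<^sup>L ?Q (indicator {x \<in> space ?Q. x i \<in> A \<and> x j \<in> A})"
    by (intro Bochner_Integration.integral_cong) (auto simp: indicator_def)
  also have "\<dots> = measure ?Q {x \<in> space ?Q. x i \<in> A \<and> x j \<in> A}"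
    by (simp add: Int_absorb2 subset_eq)
  finally show "integral\<^sup>L ?Q (\<lambda>x. indicator A (x i) * indicator A (x j) :: real)
      = (if i = j then measure P A else measure P A ^ 2)"
    using measure_PiM_coordinates_in[OF assms] by simp
qed

lemma hits_moments:
  assumes P: "prob_space P" and A: "A \<in> sets P"
  defines "p \<equiv> measure P A"
  shows "integrable (pow_measure P n) (\<lambda>x. (hits A n x)\<^sup>2)"
    and "prob_space.expectation (pow_measure P n) (hits A n) = real n * p"
    and "prob_space.variance (pow_measure P n) (hits A n) = real n * (p - p\<^sup>2)"
proof -
  let ?Q = "pow_measure P n"
  let ?I = "\<lambda>i j x. indicator A (x i) * indicator A (x j) :: real"
  interpret Q: prob_space ?Q
    using P by (intro prob_space_PiM) auto
  note moments = expectation_PiM_indicator_product[OF P A]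
  have square: "(hits A n x)\<^sup>2 = (\<Sum>i<n. \<Sum>j<n. ?I i j x)" for x
    unfolding hits_def power2_eq_square by (simp add: sum_product)
  show square_integrable: "integrable ?Q (\<lambda>x. (hits A n x)\<^sup>2)"
    unfolding square by (intro Bochner_Integration.integrable_sum moments) auto
  have "Q.expectation (hits A n) = Q.expectation (\<lambda>x. \<Sum>i<n. ?I i i x)"
    unfolding hits_def by (intro Bochner_Integration.integral_cong) (auto simp: indicator_def)
  also have "\<dots> = (\<Sum>i<n. Q.expectation (?I i i))"
    by (intro Bochner_Integration.integral_sum moments) auto
  also have "\<dots> = real n * p"
    unfolding p_def by (simp add: moments del: indicator_simps)
  finally show expectation: "Q.expectation (hits A n) = real n * p" .
  have "Q.expectation (\<lambda>x. (hits A n x)\<^sup>2) = (\<Sum>i<n. Q.expectation (\<lambda>x. \<Sum>j<n. ?I i j x))"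
    unfolding square
    by (intro Bochner_Integration.integral_sum Bochner_Integration.integrable_sum moments(1)) auto
  also have "\<dots> = (\<Sum>i<n. \<Sum>j<n. Q.expectation (?I i j))"
    by (intro sum.cong refl Bochner_Integration.integral_sum moments(1)) auto
  also have "\<dots> = (\<Sum>i<n. \<Sum>j<n. if i = j then p else p\<^sup>2)"
    unfolding p_def by (simp add: moments(2) del: indicator_simps)
  also have "\<dots> = (\<Sum>i<n. \<Sum>j<n. p\<^sup>2 + (if i = j then p - p\<^sup>2 else 0))"
    by (intro sum.cong) auto
  also have "\<dots> = real n * (real n * p\<^sup>2) + real n * (p - p\<^sup>2)"
    by (simp add: sum.distrib distrib_left)
  finally have second_moment:
    "Q.expectation (\<lambda>x. (hits A n x)\<^sup>2) = real n * (real n * p\<^sup>2) + real n * (p - p\<^sup>2)" .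
  have "integrable ?Q (hits A n)"
    by (intro Q.integrable_const_bound[where B = "real n"])
      (auto simp: hits_def hits_measurable[OF A] intro!: order.trans[OF sum_abs] order.trans[OF sum_bounded_above[where K = 1]])
  then show "Q.variance (hits A n) = real n * (p - p\<^sup>2)"
    by (subst Q.variance_eq, simp_all add: square_integrable second_moment expectation)
      (simp add: power2_eq_square algebra_simps)
qed

lemma hits_concentration:
  assumes P: "prob_space P" and A: "A \<in> sets P" and "n > 0" "e > 0"
  shows "measure (pow_measure P n)
      {x \<in> space (pow_measure P n). \<bar>hits A n x - real n * measure P A\<bar> < real n * e}
    \<ge> 1 - 1 / (real n * e\<^sup>2)"
proof -
  let ?Q = "pow_measure P n"
  let ?p = "measure P A"
  let ?far = "{x \<in> space ?Q. \<bar>hits A n x - real n * ?p\<bar> \<ge> real n * e}"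
  interpret Q: prob_space ?Q
    using P by (intro prob_space_PiM) auto
  have [measurable]: "A \<in> sets P" by fact
  have "?p - ?p\<^sup>2 \<le> 1"
    using prob_space.prob_le_1[OF P, of A] measure_nonneg[of P A] zero_le_power2[of ?p] by linarith
  have "Q.prob ?far \<le> Q.variance (hits A n) / (real n * e)\<^sup>2"
    using Q.Chebyshev_inequality[of "hits A n" "real n * e"] assms
    by (simp add: hits_moments)
  also have "\<dots> = (?p - ?p\<^sup>2) / (real n * e\<^sup>2)"
    using assms by (subst hits_moments(3)[OF P A]) (simp add: power2_eq_square)
  also have "\<dots> \<le> 1 / (real n * e\<^sup>2)"
    using assms \<open>?p - ?p\<^sup>2 \<le> 1\<close> by (intro divide_right_mono) auto
  finally have "Q.prob ?far \<le> 1 / (real n * e\<^sup>2)" .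
  moreover have "Q.prob (space ?Q - ?far) = 1 - Q.prob ?far"
    by (intro Q.prob_compl) measurable
  moreover have "space ?Q - ?far
      = {x \<in> space ?Q. \<bar>hits A n x - real n * ?p\<bar> < real n * e}"
    by auto
  ultimately show ?thesis by simp
qed

lemma separating_product_events:
  assumes Pa: "prob_space Pa" and Pb: "prob_space Pb"
    and sets_Pa: "sets Pa = sets M" and sets_Pb: "sets Pb = sets M"
    and A: "A \<in> sets M" and "measure Pa A < measure Pb A"
    and "\<delta>a < 1" "\<delta>b < 1"
  obtains n E1 E2 where "n \<ge> 1" "E1 \<in> sets (pow_measure M n)" "E2 \<in> sets (pow_measure M n)"
    "E1 \<inter> E2 = {}" "measure (pow_measure Pa n) E1 \<ge> \<delta>a" "measure (pow_measure Pb n) E2 \<ge> \<delta>b"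
proof -
  define e where "e = (measure Pb A - measure Pa A) / 2"
  define k where "k = 1 - max \<delta>a \<delta>b"
  have "e > 0" "k > 0"
    using assms by (auto simp: e_def k_def)
  obtain n :: nat where n: "real n > 1 / (e\<^sup>2 * k)"
    using reals_Archimedean2 by blast
  moreover have "1 / (e\<^sup>2 * k) > 0"
    using \<open>e > 0\<close> \<open>k > 0\<close> by simp
  ultimately have "n > 0"
    by (metis of_nat_0_less_iff order.strict_trans)
  have "1 / (real n * e\<^sup>2) < k"
    using n \<open>e > 0\<close> \<open>k > 0\<close> \<open>n > 0\<close> by (simp add: field_simps)
  interpret Pa_pow: prob_space "pow_measure Pa n"
    using Pa by (intro prob_space_PiM) auto
  interpret Pb_pow: prob_space "pow_measure Pb n"
    using Pb by (intro prob_space_PiM) auto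
  have [measurable]: "A \<in> sets Pa" "A \<in> sets Pb"
    using A sets_Pa sets_Pb by auto
  have sets_pow: "sets (pow_measure Pa n) = sets (pow_measure M n)"
    "sets (pow_measure Pb n) = sets (pow_measure M n)"
    using sets_Pa sets_Pb by (auto intro!: sets_PiM_cong)
  \<comment> \<open>the midpoint \<open>t\<close> is at distance \<open>n e\<close> from both means \<open>n Pa(A)\<close> and \<open>n Pb(A)\<close>\<close>
  define t where "t = real n * (measure Pa A + e)"
  define E1 where "E1 = {x \<in> space (pow_measure Pa n). hits A n x < t}"
  define E2 where "E2 = {x \<in> space (pow_measure Pb n). hits A n x > t}"
  have "t = real n * (measure Pb A - e)"
    by (simp add: t_def e_def algebra_simps)
  have "E1 \<in> sets (pow_measure Pa n)" "E2 \<in> sets (pow_measure Pb n)"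
    unfolding E1_def E2_def by measurable
  then have "E1 \<in> sets (pow_measure M n)" "E2 \<in> sets (pow_measure M n)"
    unfolding sets_pow .
  moreover have "E1 \<inter> E2 = {}"
    by (auto simp: E1_def E2_def)
  moreover have "measure (pow_measure Pa n) E1 \<ge> \<delta>a"
  proof -
    have "1 - 1 / (real n * e\<^sup>2) \<le> measure (pow_measure Pa n)
        {x \<in> space (pow_measure Pa n). \<bar>hits A n x - real n * measure Pa A\<bar> < real n * e}"
      using hits_concentration[OF Pa _ \<open>n > 0\<close> \<open>e > 0\<close>] by simp
    also have "\<dots> \<le> measure (pow_measure Pa n) E1"
      by (intro Pa_pow.finite_measure_mono) (auto simp: E1_def t_def distrib_left)
    finally show ?thesis
      using \<open>1 / (real n * e\<^sup>2) < k\<close> by (simp add: k_def)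
  qed
  moreover have "measure (pow_measure Pb n) E2 \<ge> \<delta>b"
  proof -
    have "1 - 1 / (real n * e\<^sup>2) \<le> measure (pow_measure Pb n)
        {x \<in> space (pow_measure Pb n). \<bar>hits A n x - real n * measure Pb A\<bar> < real n * e}"
      using hits_concentration[OF Pb _ \<open>n > 0\<close> \<open>e > 0\<close>] by simp
    also have "\<dots> \<le> measure (pow_measure Pb n) E2"
      by (intro Pb_pow.finite_measure_mono)
        (auto simp: E2_def \<open>t = real n * (measure Pb A - e)\<close> right_diff_distrib)
    finally show ?thesis
      using \<open>1 / (real n * e\<^sup>2) < k\<close> by (simp add: k_def)
  qed
  ultimately show ?thesis
    using \<open>n > 0\<close> by (intro that) auto
qed

lemma C_class_T_bar_measure_le:
  assumes Pa: "prob_space Pa" and Pb: "prob_space Pb"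
    and "sets Pa = sets M" "sets Pb = sets M"
    and "\<delta>a < 1" "\<delta>b < 1"
    and C: "C_class M C" and T_bar_C: "T_bar Pa \<delta>a \<union> T_bar Pb \<delta>b \<subseteq> C"
    and "A \<in> sets M"
  shows "measure Pb A \<le> measure Pa A"
proof (rule ccontr)
  assume "\<not> measure Pb A \<le> measure Pa A"
  then obtain n E1 E2 where "n \<ge> 1" and events: "E1 \<in> sets (pow_measure M n)" "E2 \<in> sets (pow_measure M n)"
    and "E1 \<inter> E2 = {}" "measure (pow_measure Pa n) E1 \<ge> \<delta>a" "measure (pow_measure Pb n) E2 \<ge> \<delta>b"
    using separating_product_events[OF Pa Pb] assms by (metis not_le)
  moreover from calculation have "(n, E1) \<in> C" "(n, E2) \<in> C"
    using T_bar_C events \<open>sets Pa = sets M\<close> \<open>sets Pb = sets M\<close>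
    by (auto simp: T_bar_def ext_events_def cong: sets_PiM_cong)
  ultimately show False
    using C unfolding C_class_def by blast
qed

theorem mainTheorem6:
  fixes M P1 P2 :: "'a measure" and \<delta>1 \<delta>2 :: real
    and C :: "(nat \<times> (nat \<Rightarrow> 'a) set) set"
  assumes "prob_space P1" and "prob_space P2"
    and "sets P1 = sets M" and "sets P2 = sets M"
    and "1/2 < \<delta>1" and "\<delta>1 < 1" and "1/2 < \<delta>2" and "\<delta>2 < 1"
    and "C_class M C"
    and "T_bar P1 \<delta>1 \<union> T_bar P2 \<delta>2 \<subseteq> C"
  shows "P1 = P2"
proof (rule measure_eqI)
  show "sets P1 = sets P2"
    using assms by simp
  fix A assume "A \<in> sets P1"
  then have "A \<in> sets M"
    using assms by simp
  have "T_bar P2 \<delta>2 \<union> T_bar P1 \<delta>1 \<subseteq> C"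
    using assms by auto
  then have "measure P1 A = measure P2 A"
    using C_class_T_bar_measure_le[of P1 P2 M] C_class_T_bar_measure_le[of P2 P1 M] assms \<open>A \<in> sets M\<close>
    by (meson order_antisym)
  then show "emeasure P1 A = emeasure P2 A"
    using assms(1,2) by (simp add: prob_space.finite_measure finite_measure.emeasure_eq_measure)
qed

end
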